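(* No multiple zeta-star value $\zeta^{\star}(k_1,\ldots,k_r)$ (with $r\geq1$, $k_1\geq2$, $k_2,\ldots,k_r\geq1$ integers) is an integer.
   Context: $\zeta^{\star}(k_1,\ldots,k_r)=\sum_{n_1\geq n_2\geq\cdots\geq n_r\geq 1}\frac{1}{n_1^{k_1}\cdots n_r^{k_r}}$. *)

theory Defs
  imports "HOL-Analysis.Analysis"
begin

definition zeta_star_indices :: "nat \<Rightarrow> nat list set" where
  "zeta_star_indices r = {ns. length ns = r \<and> sorted_wrt (\<ge>) ns \<and> (\<forall>n\<in>set ns. n \<ge> 1)}"

definition zeta_star :: "nat list \<Rightarrow> real" where
  "zeta_star ks = (\<Sum>\<^sub>\<infinity> ns \<in> zeta_star_indices (length ks).
      \<Prod>i<length ks. 1 / real (ns ! i) ^ (ks ! i))"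

end

theory Submission
  imports Defs "HOL-Real_Asymp.Real_Asymp"
begin

(* Let Z_N(k) be the partial sum of zeta-star(k) over n_1 <= N.  If k_1 >= 3, comparison with
   zeta-star(2) gives 1 < zeta-star(k) <= 7/4.  If k_1 = 2, write k = (2, u) with u = (1^a, l),
   where l is empty or starts with an entry >= 2, and consider for b >= 0
     E_N = Z_N(2, u) + (Z_N(2, u) + Z_N(u_1, ...) + Z_N(u_2, ...) + ... + Z_N(u_b, ...)) / N.
   Then E_1 = b + 2 and E_N - Z_N(2, u) tends to 0, while N (N + 1) (E_(N+1) - E_N) telescopes:
   for b = a + 1 it is (N + 1) (Z_(N+1)(l) - Z_N(l)) - Z_(N+1)(k) < 0, and for b = a it is
   Z_(N+1)(l) - Z_(N+1)(k).  Hence zeta-star(k) < a + 3, and zeta-star(k) > a + 2 or < a + 2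
   according as the partial sums of l dominate those of k or conversely; a lexicographic
   comparison of l with k decides which.  In the second case, if a > 0, then
   k = (2, 1^(a-1), (1, l)) falls under the first case because (1, l) dominates k, so that
   zeta-star(k) > a + 1. *)

lemma not_Ints_between:
  fixes z :: real
  assumes "real m < z" "z < real m + 1"
  shows "z \<notin> \<int>"
proof
  assume "z \<in> \<int>"
  then obtain n where "z = of_int n"
    by (auto elim: Ints_cases)
  with assms have "int m < n" "n < int m + 1"
    by linarith+
  then show False
    by linarith
qed

section \<open>Partial sums\<close>

fun zeta_star_upto :: "nat list \<Rightarrow> nat \<Rightarrow> real" where
  "zeta_star_upto [] N = 1"
| "zeta_star_upto (k # ks) N = (\<Sum>M=1..N. zeta_star_upto ks M / real M ^ k)"

lemmas zeta_star_upto_Cons = zeta_star_upto.simps(2)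
declare zeta_star_upto.simps(2) [simp del]

lemma zeta_star_upto_nonneg: "0 \<le> zeta_star_upto ks N"
  by (induction ks arbitrary: N) (auto simp: zeta_star_upto_Cons intro!: sum_nonneg)

lemma zeta_star_upto_1 [simp]: "zeta_star_upto ks (Suc 0) = 1"
  by (induction ks) (auto simp: zeta_star_upto_Cons)

lemma zeta_star_upto_Suc:
  "zeta_star_upto (k # ks) (Suc N) = zeta_star_upto (k # ks) N + zeta_star_upto ks (Suc N) / real (Suc N) ^ k"
  by (simp add: zeta_star_upto_Cons)

lemma zeta_star_upto_2: "zeta_star_upto (k # ks) 2 = 1 + zeta_star_upto ks 2 / 2 ^ k"
  by (simp add: zeta_star_upto_Cons numeral_2_eq_2)

lemma zeta_star_upto_mono:
  assumes "N \<le> N'"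
  shows "zeta_star_upto ks N \<le> zeta_star_upto ks N'"
proof (cases ks)
  case (Cons k ks')
  then show ?thesis
    using assms by (auto simp: zeta_star_upto_Cons intro!: sum_mono2 divide_nonneg_nonneg zeta_star_upto_nonneg)
qed simp

lemma zeta_star_upto_ge_1: "N \<ge> 1 \<Longrightarrow> 1 \<le> zeta_star_upto ks N"
  using zeta_star_upto_mono[of 1 N ks] by simp

lemma zeta_star_upto_le_self:
  assumes "0 \<notin> set ks" "N \<ge> 1"
  shows "zeta_star_upto ks N \<le> real N"
  using assms
proof (induction ks arbitrary: N)
  case (Cons k ks)
  have "zeta_star_upto (k # ks) N \<le> (\<Sum>M=1..N. 1)"
    unfolding zeta_star_upto_Cons
  proof (rule sum_mono)
    fix M assume M: "M \<in> {1..N}"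
    have "zeta_star_upto ks M \<le> real M"
      using Cons M by simp
    also have "\<dots> \<le> real M ^ k"
      using Cons.prems M power_increasing[of 1 k "real M"] by (simp add: Suc_le_eq)
    finally show "zeta_star_upto ks M / real M ^ k \<le> 1"
      using M by simp
  qed
  then show ?case
    by simp
qed simp

lemma zeta_star_upto_2_less_2: "0 \<notin> set ks \<Longrightarrow> zeta_star_upto ks 2 < 2"
proof (induction ks)
  case (Cons k ks)
  have "(2::real) ^ 1 \<le> 2 ^ k"
    using Cons.prems by (intro power_increasing) auto
  then show ?case
    using Cons zeta_star_upto_nonneg[of ks 2] by (simp add: zeta_star_upto_2 field_simps)
qed simp

lemma harm_le_1_plus_ln: "N \<ge> 1 \<Longrightarrow> (harm N :: real) \<le> 1 + ln (real N)"
proof -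
  assume "N \<ge> 1"
  then obtain n where n: "N = Suc n"
    by (cases N) auto
  have "harm (Suc n) - ln (real (Suc n)) \<le> harm (Suc 0) - ln (real (Suc 0))"
    using decseq_harm_diff_ln unfolding decseq_def by blast
  then show ?thesis
    using n by (simp add: harm_def)
qed

lemma zeta_star_upto_le_harm_power:
  "0 \<notin> set ks \<Longrightarrow> zeta_star_upto ks N \<le> harm N ^ length ks"
proof (induction ks arbitrary: N)
  case (Cons k ks)
  have "zeta_star_upto (k # ks) N \<le> (\<Sum>M=1..N. harm N ^ length ks * (1 / real M))"
    unfolding zeta_star_upto_Cons
  proof (rule sum_mono)
    fix M assume M: "M \<in> {1..N}"
    have "zeta_star_upto ks M \<le> harm M ^ length ks"
      using Cons by simp
    also have "\<dots> \<le> harm N ^ length ks"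
      using M by (intro power_mono harm_mono harm_nonneg) auto
    finally have "zeta_star_upto ks M \<le> harm N ^ length ks" .
    moreover have "1 / real M ^ k \<le> 1 / real M"
      using M Cons.prems power_increasing[of 1 k "real M"] by (intro divide_left_mono) auto
    ultimately have "zeta_star_upto ks M * (1 / real M ^ k) \<le> harm N ^ length ks * (1 / real M)"
      by (intro mult_mono) (auto simp: harm_nonneg)
    then show "zeta_star_upto ks M / real M ^ k \<le> harm N ^ length ks * (1 / real M)"
      by simp
  qed
  also have "\<dots> = harm N ^ length ks * harm N"
    by (simp add: harm_def divide_inverse flip: sum_distrib_left)
  finally show ?case
    by (simp add: mult.commute)
qed simp

lemma LIMSEQ_1_plus_ln_power_over_self: "(\<lambda>N. (1 + ln (real N)) ^ l / real N) \<longlonglongrightarrow> 0"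
proof -
  define s :: real where "s = 1 / real (Suc l)"
  have s: "s > 0"
    by (simp add: s_def)
  have "(\<lambda>N. 1 / real N powr s) \<longlonglongrightarrow> 0"
    using s by real_asymp
  then have "(\<lambda>N. ln (real N) / real N powr s + 1 / real N powr s) \<longlonglongrightarrow> 0 + 0"
    by (intro tendsto_add lim_ln_over_power s)
  then have lim: "(\<lambda>N. (1 + ln (real N)) / real N powr s) \<longlonglongrightarrow> 0"
    by (simp add: add_divide_distrib add.commute)
  have bound_lim: "(\<lambda>N. ((1 + ln (real N)) / real N powr s) ^ Suc l) \<longlonglongrightarrow> 0"
    using tendsto_power[OF lim, of "Suc l"] by simp
  show ?thesis
  proof (rule tendsto_sandwich[OF _ _ tendsto_const bound_lim])
    show "\<forall>\<^sub>F N in sequentially. 0 \<le> (1 + ln (real N)) ^ l / real N"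
      using eventually_ge_at_top[of 1] by eventually_elim simp
    show "\<forall>\<^sub>F N in sequentially. (1 + ln (real N)) ^ l / real N \<le> ((1 + ln (real N)) / real N powr s) ^ Suc l"
      using eventually_ge_at_top[of 1]
    proof eventually_elim
      case (elim N)
      have "(1 + ln (real N)) ^ l \<le> (1 + ln (real N)) ^ Suc l"
        using elim by (intro power_increasing) auto
      moreover have "(real N powr s) ^ Suc l = real N powr (s * real (Suc l))"
        using elim by (subst powr_realpow[symmetric]) (auto simp: powr_powr)
      moreover have "real N powr (s * real (Suc l)) = real N"
        using elim by (simp add: s_def)
      ultimately show ?case
        using elim by (simp add: power_divide divide_right_mono)
    qed
  qed
qed

lemma LIMSEQ_zeta_star_upto_over_self:
  assumes "0 \<notin> set ks"
  shows "(\<lambda>N. zeta_star_upto ks N / real N) \<longlonglongrightarrow> 0"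
proof (rule tendsto_sandwich[OF _ _ tendsto_const LIMSEQ_1_plus_ln_power_over_self])
  show "\<forall>\<^sub>F N in sequentially. 0 \<le> zeta_star_upto ks N / real N"
    by (simp add: zeta_star_upto_nonneg)
  show "\<forall>\<^sub>F N in sequentially. zeta_star_upto ks N / real N \<le> (1 + ln (real N)) ^ length ks / real N"
    using eventually_ge_at_top[of 1]
  proof eventually_elim
    case (elim N)
    have "zeta_star_upto ks N \<le> harm N ^ length ks"
      using assms by (rule zeta_star_upto_le_harm_power)
    also have "\<dots> \<le> (1 + ln (real N)) ^ length ks"
      using harm_le_1_plus_ln[OF elim] by (intro power_mono harm_nonneg)
    finally show ?case
      by (simp add: divide_right_mono)
  qed
qed

section \<open>Partial sums and the infinite sum\<close>

definition zeta_star_indices_upto :: "nat \<Rightarrow> nat \<Rightarrow> nat list set" where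
  "zeta_star_indices_upto r N = {ns \<in> zeta_star_indices r. \<forall>n\<in>set ns. n \<le> N}"

definition zeta_star_term :: "nat list \<Rightarrow> nat list \<Rightarrow> real" where
  "zeta_star_term ks ns = (\<Prod>i<length ks. 1 / real (ns ! i) ^ (ks ! i))"

lemma finite_zeta_star_indices_upto: "finite (zeta_star_indices_upto r N)"
proof (rule finite_subset)
  show "zeta_star_indices_upto r N \<subseteq> {ns. set ns \<subseteq> {..N} \<and> length ns = r}"
    by (auto simp: zeta_star_indices_upto_def zeta_star_indices_def)
qed (simp add: finite_lists_length_eq)

lemma zeta_star_indices_upto_0: "zeta_star_indices_upto 0 N = {[]}"
  by (auto simp: zeta_star_indices_upto_def zeta_star_indices_def)

lemma zeta_star_indices_upto_Suc:
  "zeta_star_indices_upto (Suc r) N = (\<lambda>(M, ns). M # ns) ` (SIGMA M:{1..N}. zeta_star_indices_upto r M)"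
proof (intro equalityI subsetI)
  fix xs assume xs: "xs \<in> zeta_star_indices_upto (Suc r) N"
  then obtain M ns where "xs = M # ns"
    by (cases xs) (auto simp: zeta_star_indices_upto_def zeta_star_indices_def)
  with xs show "xs \<in> (\<lambda>(M, ns). M # ns) ` (SIGMA M:{1..N}. zeta_star_indices_upto r M)"
    by (force simp: zeta_star_indices_upto_def zeta_star_indices_def)
qed (auto simp: zeta_star_indices_upto_def zeta_star_indices_def; meson le_trans)

lemma zeta_star_eq_infsum: "zeta_star ks = infsum (zeta_star_term ks) (zeta_star_indices (length ks))"
  by (simp add: zeta_star_def zeta_star_term_def [abs_def])

lemma zeta_star_term_nonneg: "0 \<le> zeta_star_term ks ns"
  by (simp add: zeta_star_term_def prod_nonneg)

lemma zeta_star_term_Cons: "zeta_star_term (k # ks) (M # ns) = 1 / real M ^ k * zeta_star_term ks ns"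
  unfolding zeta_star_term_def length_Cons by (subst prod.lessThan_Suc_shift) simp

lemma sum_zeta_star_term_upto:
  "(\<Sum>ns\<in>zeta_star_indices_upto (length ks) N. zeta_star_term ks ns) = zeta_star_upto ks N"
proof (induction ks arbitrary: N)
  case Nil
  then show ?case
    by (simp add: zeta_star_indices_upto_0 zeta_star_term_def)
next
  case (Cons k ks)
  have inj: "inj_on (\<lambda>(M, ns). M # ns) (SIGMA M:{1..N}. zeta_star_indices_upto (length ks) M)"
    by (auto simp: inj_on_def)
  have "(\<Sum>ns\<in>zeta_star_indices_upto (length (k # ks)) N. zeta_star_term (k # ks) ns)
      = (\<Sum>x\<in>(SIGMA M:{1..N}. zeta_star_indices_upto (length ks) M).
           zeta_star_term (k # ks) (case x of (M, ns) \<Rightarrow> M # ns))"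
    by (simp only: length_Cons zeta_star_indices_upto_Suc sum.reindex[OF inj] o_def)
  also have "\<dots> = (\<Sum>M=1..N. \<Sum>ns\<in>zeta_star_indices_upto (length ks) M. zeta_star_term (k # ks) (M # ns))"
    by (subst sum.Sigma) (auto simp: finite_zeta_star_indices_upto intro!: sum.cong split: prod.split)
  also have "\<dots> = zeta_star_upto (k # ks) N"
    by (simp add: zeta_star_term_Cons zeta_star_upto_Cons Cons.IH flip: sum_divide_distrib)
  finally show ?case .
qed

lemma sum_zeta_star_term_le:
  assumes bound: "\<And>N. zeta_star_upto ks N \<le> c"
    and F: "finite F" "F \<subseteq> zeta_star_indices (length ks)"
  shows "sum (zeta_star_term ks) F \<le> c"
proof -
  define N where "N = Max (insert 0 (\<Union>ns\<in>F. set ns))"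
  have "F \<subseteq> zeta_star_indices_upto (length ks) N"
    using F by (auto simp: zeta_star_indices_upto_def N_def intro!: Max_ge)
  then have "sum (zeta_star_term ks) F \<le> sum (zeta_star_term ks) (zeta_star_indices_upto (length ks) N)"
    by (intro sum_mono2 finite_zeta_star_indices_upto zeta_star_term_nonneg)
  also have "\<dots> \<le> c"
    using bound by (simp add: sum_zeta_star_term_upto)
  finally show ?thesis .
qed

lemma zeta_star_term_summable_on:
  assumes "\<And>N. zeta_star_upto ks N \<le> c"
  shows "zeta_star_term ks summable_on zeta_star_indices (length ks)"
  using sum_zeta_star_term_le[OF assms]
  by (intro nonneg_bdd_above_summable_on bdd_aboveI) (auto simp: zeta_star_term_nonneg)

lemma zeta_star_upto_le_zeta_star:
  assumes "\<And>N. zeta_star_upto ks N \<le> c"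
  shows "zeta_star_upto ks N \<le> zeta_star ks"
proof -
  have "zeta_star_upto ks N = sum (zeta_star_term ks) (zeta_star_indices_upto (length ks) N)"
    by (simp add: sum_zeta_star_term_upto)
  also have "\<dots> \<le> infsum (zeta_star_term ks) (zeta_star_indices (length ks))"
    by (intro finite_sum_le_infsum zeta_star_term_summable_on[OF assms] finite_zeta_star_indices_upto)
       (auto simp: zeta_star_indices_upto_def zeta_star_term_nonneg)
  finally show ?thesis
    by (simp add: zeta_star_eq_infsum)
qed

lemma zeta_star_le:
  assumes "\<And>N. zeta_star_upto ks N \<le> c"
  shows "zeta_star ks \<le> c"
  unfolding zeta_star_eq_infsum
  using zeta_star_term_summable_on[OF assms] sum_zeta_star_term_le[OF assms]
  by (intro infsum_le_finite_sums) auto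

section \<open>Comparing index lists\<close>

fun dominates :: "nat list \<Rightarrow> nat list \<Rightarrow> bool" where
  "dominates [] v = False"
| "dominates (x # u) [] = True"
| "dominates (x # u) (y # v) = (x < y \<or> x = y \<and> dominates u v)"

lemma dominates_total: "u \<noteq> v \<Longrightarrow> dominates u v \<or> dominates v u"
proof (induction u arbitrary: v)
  case Nil
  then show ?case
    by (cases v) auto
next
  case (Cons x u)
  then show ?case
    by (cases v) auto
qed

lemma divide_power_le_inverse_power:
  fixes m :: real
  assumes "1 \<le> m" "x < y"
  shows "m / m ^ y \<le> 1 / m ^ x"
proof -
  have "m * m ^ x \<le> m ^ y"
    using assms power_increasing[of "Suc x" y m] by simp
  then show ?thesis
    using assms by (simp add: divide_simps mult.commute)
qed

lemma zeta_star_upto_le_if_dominates: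
  assumes "dominates u v" "0 \<notin> set u" "0 \<notin> set v" "N \<ge> 1"
  shows "zeta_star_upto v N \<le> zeta_star_upto u N"
  using assms
proof (induction u v arbitrary: N rule: dominates.induct)
  case (2 x u)
  then show ?case
    by (simp add: zeta_star_upto_ge_1)
next
  case (3 x u y v)
  show ?case
    unfolding zeta_star_upto_Cons
  proof (rule sum_mono)
    fix M assume M: "M \<in> {1..N}"
    show "zeta_star_upto v M / real M ^ y \<le> zeta_star_upto u M / real M ^ x"
    proof (cases "x < y")
      case True
      have "zeta_star_upto v M / real M ^ y \<le> real M / real M ^ y"
        using 3 M by (intro divide_right_mono zeta_star_upto_le_self) auto
      also have "\<dots> \<le> 1 / real M ^ x"
        using True M by (intro divide_power_le_inverse_power) auto
      also have "\<dots> \<le> zeta_star_upto u M / real M ^ x"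
        using M by (intro divide_right_mono zeta_star_upto_ge_1) auto
      finally show ?thesis .
    next
      case False
      with "3.prems"(1) have "y = x" "dominates u v"
        by auto
      then show ?thesis
        using 3 M by (auto intro!: divide_right_mono)
    qed
  qed
qed simp

lemma zeta_star_upto_2_less_if_dominates:
  assumes "dominates u v" "0 \<notin> set u" "0 \<notin> set v"
  shows "zeta_star_upto v 2 < zeta_star_upto u 2"
  using assms
proof (induction u v rule: dominates.induct)
  case (2 x u)
  then show ?case
    using zeta_star_upto_ge_1[of 2 u] by (simp add: zeta_star_upto_2)
next
  case (3 x u y v)
  show ?case
  proof (cases "x < y")
    case True
    have "zeta_star_upto v 2 / 2 ^ y < 2 / 2 ^ y"
      using 3 zeta_star_upto_2_less_2[of v] by (simp add: divide_strict_right_mono)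
    also have "\<dots> \<le> 1 / 2 ^ x"
      using True divide_power_le_inverse_power[of 2] by simp
    also have "\<dots> \<le> zeta_star_upto u 2 / 2 ^ x"
      using zeta_star_upto_ge_1[of 2 u] by (simp add: divide_right_mono)
    finally show ?thesis
      by (simp add: zeta_star_upto_2)
  next
    case False
    then show ?thesis
      using 3 by (simp add: zeta_star_upto_2 divide_strict_right_mono)
  qed
qed simp

section \<open>First index at least 3\<close>

lemma zeta_star_upto_single_2_le: "N \<ge> 2 \<Longrightarrow> zeta_star_upto [2] N \<le> 7 / 4 - 1 / real N"
proof (induction N rule: dec_induct)
  case base
  then show ?case
    by (simp add: zeta_star_upto_2)
next
  case (step n)
  have n: "real n \<ge> 2"
    using step by simp
  have "zeta_star_upto [2] (Suc n) = zeta_star_upto [2] n + 1 / (1 + real n) ^ 2"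
    by (simp add: zeta_star_upto_Suc)
  also have "\<dots> \<le> 7 / 4 - 1 / real n + 1 / (1 + real n) ^ 2"
    using step by simp
  also have "\<dots> \<le> 7 / 4 - 1 / real (Suc n)"
    using n by (simp add: divide_simps) (simp add: algebra_simps power2_eq_square)
  finally show ?case .
qed

lemma zeta_star_ge_3_not_Ints:
  assumes "k \<ge> 3" "0 \<notin> set w"
  shows "zeta_star (k # w) \<notin> \<int>"
proof -
  have bound: "zeta_star_upto (k # w) N \<le> 7 / 4" for N
  proof (cases "N \<ge> 2")
    case True
    have "zeta_star_upto (k # w) N \<le> zeta_star_upto [2] N"
      using assms True by (intro zeta_star_upto_le_if_dominates) auto
    moreover have "zeta_star_upto [2] N \<le> 7 / 4 - 1 / real N"
      using True by (rule zeta_star_upto_single_2_le)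
    moreover have "0 \<le> 1 / real N"
      by simp
    ultimately show ?thesis
      by linarith
  next
    case False
    then show ?thesis
      using zeta_star_upto_mono[of N 1 "k # w"] by simp
  qed
  have "1 < zeta_star_upto (k # w) 2"
    using zeta_star_upto_ge_1[of 2 w] by (simp add: zeta_star_upto_2)
  also have "\<dots> \<le> zeta_star (k # w)"
    using bound by (rule zeta_star_upto_le_zeta_star)
  finally show ?thesis
    using zeta_star_le[OF bound] by (intro not_Ints_between[of 1]) auto
qed

section \<open>First index 2\<close>

(* E_N of the header, with the tail sums Z_N(u_(i+1), ...) written as drop i u. *)
definition zeta2_approx :: "nat list \<Rightarrow> nat \<Rightarrow> nat \<Rightarrow> real" where
  "zeta2_approx u b N = zeta_star_upto (2 # u) N
     + (zeta_star_upto (2 # u) N + (\<Sum>i<b. zeta_star_upto (drop i u) N)) / real N"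

lemma zeta2_approx_1: "zeta2_approx u b 1 = real b + 2"
  by (simp add: zeta2_approx_def)

lemma zeta2_approx_increment:
  assumes "N \<ge> 1"
  shows "real (Suc N) * real N * (zeta2_approx u b (Suc N) - zeta2_approx u b N)
    = zeta_star_upto u (Suc N) - zeta_star_upto (2 # u) (Suc N)
      + (\<Sum>i<b. real (Suc N) * (zeta_star_upto (drop i u) (Suc N) - zeta_star_upto (drop i u) N)
                - zeta_star_upto (drop i u) (Suc N))"
proof -
  define n where "n = real N"
  define A where "A = zeta_star_upto (2 # u) N"
  define A' where "A' = zeta_star_upto (2 # u) (Suc N)"
  define Q where "Q = (\<Sum>i<b. zeta_star_upto (drop i u) N)"
  define Q' where "Q' = (\<Sum>i<b. zeta_star_upto (drop i u) (Suc N))"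
  define U where "U = zeta_star_upto u (Suc N)"
  have n: "n \<ge> 1"
    using assms by (simp add: n_def)
  have "n \<noteq> 0" "n + 1 \<noteq> 0"
    using n by auto
  have A': "A' = A + U / (n + 1) ^ 2"
    by (simp add: A_def A'_def U_def n_def zeta_star_upto_Suc add.commute)
  have "real (Suc N) * real N * (zeta2_approx u b (Suc N) - zeta2_approx u b N)
      = (n + 1) * n * (A' + (A' + Q') / (n + 1) - (A + (A + Q) / n))"
    by (simp add: zeta2_approx_def n_def A_def A'_def Q_def Q'_def add.commute)
  also have "\<dots> = U - A' + ((n + 1) * (Q' - Q) - Q')"
    using \<open>n \<noteq> 0\<close> \<open>n + 1 \<noteq> 0\<close> unfolding A'
    by (simp add: divide_simps) (simp add: algebra_simps power2_eq_square)
  also have "(n + 1) * (Q' - Q) - Q'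
      = (\<Sum>i<b. real (Suc N) * (zeta_star_upto (drop i u) (Suc N) - zeta_star_upto (drop i u) N)
                - zeta_star_upto (drop i u) (Suc N))"
    by (simp add: Q_def Q'_def n_def sum_subtractf sum_distrib_left sum.distrib algebra_simps)
  finally show ?thesis
    by (simp add: U_def A'_def)
qed

lemma zeta_star_upto_Cons_1_increment:
  "real (Suc N) * (zeta_star_upto (1 # v) (Suc N) - zeta_star_upto (1 # v) N) = zeta_star_upto v (Suc N)"
  by (simp add: zeta_star_upto_Suc)

lemma sum_zeta_star_upto_increment_replicate_1:
  "(\<Sum>i<a. real (Suc N) * (zeta_star_upto (drop i (replicate a 1 @ x)) (Suc N)
                             - zeta_star_upto (drop i (replicate a 1 @ x)) N)
          - zeta_star_upto (drop i (replicate a 1 @ x)) (Suc N))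
   = zeta_star_upto x (Suc N) - zeta_star_upto (replicate a 1 @ x) (Suc N)"
proof (induction a)
  case (Suc a)
  then show ?case
    by (simp only: replicate_Suc append_Cons sum.lessThan_Suc_shift drop_0 drop_Suc_Cons
        zeta_star_upto_Cons_1_increment)
qed simp

lemma zeta2_approx_replicate_increment:
  assumes "N \<ge> 1"
  shows "real (Suc N) * real N * (zeta2_approx (replicate a 1 @ x) a (Suc N) - zeta2_approx (replicate a 1 @ x) a N)
    = zeta_star_upto x (Suc N) - zeta_star_upto (2 # replicate a 1 @ x) (Suc N)"
proof -
  have "real (Suc N) * real N * (zeta2_approx (replicate a 1 @ x) a (Suc N) - zeta2_approx (replicate a 1 @ x) a N)
    = zeta_star_upto (replicate a 1 @ x) (Suc N) - zeta_star_upto (2 # replicate a 1 @ x) (Suc N)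
      + (zeta_star_upto x (Suc N) - zeta_star_upto (replicate a 1 @ x) (Suc N))"
    by (simp only: zeta2_approx_increment[OF assms] sum_zeta_star_upto_increment_replicate_1)
  then show ?thesis
    by simp
qed

lemma zeta2_approx_replicate_Suc_increment:
  assumes "N \<ge> 1"
  shows "real (Suc N) * real N
      * (zeta2_approx (replicate a 1 @ x) (Suc a) (Suc N) - zeta2_approx (replicate a 1 @ x) (Suc a) N)
    = real (Suc N) * (zeta_star_upto x (Suc N) - zeta_star_upto x N)
      - zeta_star_upto (2 # replicate a 1 @ x) (Suc N)"
proof -
  have "drop a (replicate a 1 @ x) = x"
    by simp
  then have "real (Suc N) * real N
      * (zeta2_approx (replicate a 1 @ x) (Suc a) (Suc N) - zeta2_approx (replicate a 1 @ x) (Suc a) N)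
    = zeta_star_upto (replicate a 1 @ x) (Suc N) - zeta_star_upto (2 # replicate a 1 @ x) (Suc N)
      + ((zeta_star_upto x (Suc N) - zeta_star_upto (replicate a 1 @ x) (Suc N))
         + (real (Suc N) * (zeta_star_upto x (Suc N) - zeta_star_upto x N) - zeta_star_upto x (Suc N)))"
    by (simp only: zeta2_approx_increment[OF assms] sum.lessThan_Suc sum_zeta_star_upto_increment_replicate_1)
  then show ?thesis
    by simp
qed

lemma zeta_star_2_gt_if_approx_increasing:
  assumes "0 \<notin> set u" "\<And>N. zeta_star_upto (2 # u) N \<le> c"
    and incr: "\<And>N. N \<ge> 1 \<Longrightarrow> zeta2_approx u b N \<le> zeta2_approx u b (Suc N)"
    and "zeta2_approx u b 1 < zeta2_approx u b 2"
  shows "real b + 2 < zeta_star (2 # u)"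
proof -
  define g where "g N = zeta_star_upto (2 # u) N / real N + (\<Sum>i<b. zeta_star_upto (drop i u) N / real N)" for N
  have approx_eq: "zeta2_approx u b N = zeta_star_upto (2 # u) N + g N" for N
    by (simp add: zeta2_approx_def g_def add_divide_distrib sum_divide_distrib)
  have "g \<longlonglongrightarrow> 0 + (\<Sum>i<b. 0)"
    unfolding g_def using assms(1)
    by (intro tendsto_add tendsto_sum LIMSEQ_zeta_star_upto_over_self) (auto dest: in_set_dropD)
  then have lim: "(\<lambda>N. zeta2_approx u b 2 - g N) \<longlonglongrightarrow> zeta2_approx u b 2"
    using tendsto_diff[OF tendsto_const] by fastforce
  have "zeta2_approx u b 2 - g N \<le> zeta_star (2 # u)" if "N \<ge> 2" for N
  proof -
    have "zeta2_approx u b 2 \<le> zeta2_approx u b N"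
      by (rule lift_Suc_mono_le_ivl[of "{1..}" "zeta2_approx u b"]) (use that incr in auto)
    then show ?thesis
      using zeta_star_upto_le_zeta_star[OF assms(2), of N] approx_eq[of N] by simp
  qed
  then have "zeta2_approx u b 2 \<le> zeta_star (2 # u)"
    using LIMSEQ_le_const2[OF lim] by blast
  then show ?thesis
    using assms(4) zeta2_approx_1[of u b] by linarith
qed

lemma zeta_star_upto_2_le_if_approx_decreasing:
  assumes "\<And>N. N \<ge> 1 \<Longrightarrow> zeta2_approx u b (Suc N) \<le> zeta2_approx u b N"
  shows "zeta_star_upto (2 # u) N \<le> zeta2_approx u b 2"
proof -
  have le_approx: "zeta_star_upto (2 # u) N \<le> zeta2_approx u b N" for N
    unfolding zeta2_approx_def by (auto intro!: divide_nonneg_nonneg add_nonneg_nonneg sum_nonneg zeta_star_upto_nonneg)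
  show ?thesis
  proof (cases "N \<ge> 2")
    case True
    have "zeta2_approx u b N \<le> zeta2_approx u b 2"
      by (rule lift_Suc_antimono_le_ivl[of "{1..}" "zeta2_approx u b"]) (use assms True in auto)
    then show ?thesis
      using le_approx[of N] by simp
  next
    case False
    then show ?thesis
      using le_approx[of 2] zeta_star_upto_mono[of N 2 "2 # u"] by simp
  qed
qed

lemma zeta_star_2_less_if_approx_decreasing:
  assumes "\<And>N. N \<ge> 1 \<Longrightarrow> zeta2_approx u b (Suc N) \<le> zeta2_approx u b N"
    and "zeta2_approx u b 2 < zeta2_approx u b 1"
  shows "zeta_star (2 # u) < real b + 2"
  using zeta_star_le[OF zeta_star_upto_2_le_if_approx_decreasing[OF assms(1)]] assms(2) zeta2_approx_1[of u b]
  by linarith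

lemma zeta_star_upto_increment_le_1:
  assumes "0 \<notin> set x" "x = [] \<or> hd x \<ge> 2"
  shows "real (Suc N) * (zeta_star_upto x (Suc N) - zeta_star_upto x N) \<le> 1"
proof (cases x)
  case (Cons k w)
  define M where "M = real (Suc N)"
  have M: "M \<ge> 1"
    by (simp add: M_def)
  have "M * (zeta_star_upto x (Suc N) - zeta_star_upto x N) = M * (zeta_star_upto w (Suc N) / M ^ k)"
    by (simp add: Cons M_def zeta_star_upto_Suc)
  also have "\<dots> \<le> M * (M / M ^ 2)"
  proof (intro mult_left_mono)
    have "zeta_star_upto w (Suc N) / M ^ k \<le> M / M ^ k"
      unfolding M_def using assms Cons by (intro divide_right_mono zeta_star_upto_le_self) auto
    also have "\<dots> \<le> M / M ^ 2"
      using assms Cons M by (intro divide_left_mono power_increasing) auto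
    finally show "zeta_star_upto w (Suc N) / M ^ k \<le> M / M ^ 2" .
  qed (use M in simp)
  also have "\<dots> = 1"
    using M by (simp add: power2_eq_square)
  finally show ?thesis
    by (simp add: M_def)
qed simp

lemma zeta2_approx_replicate_Suc_decreasing:
  assumes "0 \<notin> set x" "x = [] \<or> hd x \<ge> 2" "N \<ge> 1"
  shows "zeta2_approx (replicate a 1 @ x) (Suc a) (Suc N) < zeta2_approx (replicate a 1 @ x) (Suc a) N"
proof -
  have "1 < zeta_star_upto (2 # replicate a 1 @ x) 2"
    using zeta_star_upto_ge_1[of 2 "replicate a 1 @ x"] by (simp add: zeta_star_upto_2)
  also have "\<dots> \<le> zeta_star_upto (2 # replicate a 1 @ x) (Suc N)"
    using assms(3) by (intro zeta_star_upto_mono) simp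
  finally have "1 < zeta_star_upto (2 # replicate a 1 @ x) (Suc N)" .
  then have "real (Suc N) * real N
      * (zeta2_approx (replicate a 1 @ x) (Suc a) (Suc N) - zeta2_approx (replicate a 1 @ x) (Suc a) N) < 0"
    unfolding zeta2_approx_replicate_Suc_increment[OF assms(3)]
    using zeta_star_upto_increment_le_1[OF assms(1,2), of N] by linarith
  then show ?thesis
    using assms(3) by (simp add: mult_less_0_iff)
qed

lemma zeta_star_upto_2_replicate_le:
  assumes "0 \<notin> set x" "x = [] \<or> hd x \<ge> 2"
  shows "zeta_star_upto (2 # replicate a 1 @ x) N \<le> real a + 3"
proof -
  let ?u = "replicate a 1 @ x"
  have "zeta_star_upto (2 # ?u) N \<le> zeta2_approx ?u (Suc a) 2"
    by (rule zeta_star_upto_2_le_if_approx_decreasing, rule less_imp_le,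
        rule zeta2_approx_replicate_Suc_decreasing[OF assms])
  also have "\<dots> < zeta2_approx ?u (Suc a) 1"
    using zeta2_approx_replicate_Suc_decreasing[OF assms order_refl] by (simp add: numeral_2_eq_2)
  also have "\<dots> = real a + 3"
    unfolding zeta2_approx_1 by simp
  finally show ?thesis
    by simp
qed

lemma zeta_star_2_replicate_less:
  assumes "0 \<notin> set x" "x = [] \<or> hd x \<ge> 2"
  shows "zeta_star (2 # replicate a 1 @ x) < real a + 3"
proof -
  let ?u = "replicate a 1 @ x"
  have "zeta_star (2 # ?u) < real (Suc a) + 2"
  proof (rule zeta_star_2_less_if_approx_decreasing)
    show "zeta2_approx ?u (Suc a) (Suc N) \<le> zeta2_approx ?u (Suc a) N" if "N \<ge> 1" for N
      using zeta2_approx_replicate_Suc_decreasing[OF assms that] by (rule less_imp_le)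
    show "zeta2_approx ?u (Suc a) 2 < zeta2_approx ?u (Suc a) 1"
      using zeta2_approx_replicate_Suc_decreasing[OF assms order_refl] by (simp add: numeral_2_eq_2)
  qed
  then show ?thesis
    by simp
qed

lemma zeta_star_2_replicate_gt_if_dominates:
  assumes dom: "dominates x (2 # replicate a 1 @ x)" and "0 \<notin> set x"
    and bound: "\<And>N. zeta_star_upto (2 # replicate a 1 @ x) N \<le> c"
  shows "real a + 2 < zeta_star (2 # replicate a 1 @ x)"
proof (rule zeta_star_2_gt_if_approx_increasing[OF _ bound])
  show "0 \<notin> set (replicate a 1 @ x)"
    using assms by simp
  have "0 < real (Suc 1) * real 1
      * (zeta2_approx (replicate a 1 @ x) a (Suc 1) - zeta2_approx (replicate a 1 @ x) a 1)"
    unfolding zeta2_approx_replicate_increment[OF order_refl]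
    using zeta_star_upto_2_less_if_dominates[OF dom] assms by (simp add: numeral_2_eq_2)
  then show "zeta2_approx (replicate a 1 @ x) a 1 < zeta2_approx (replicate a 1 @ x) a 2"
    by (simp add: numeral_2_eq_2)
  fix N :: nat
  assume N: "N \<ge> 1"
  have "zeta_star_upto (2 # replicate a 1 @ x) (Suc N) \<le> zeta_star_upto x (Suc N)"
    using assms by (intro zeta_star_upto_le_if_dominates[OF dom]) auto
  then have "0 \<le> real (Suc N) * real N
      * (zeta2_approx (replicate a 1 @ x) a (Suc N) - zeta2_approx (replicate a 1 @ x) a N)"
    unfolding zeta2_approx_replicate_increment[OF N] by simp
  then show "zeta2_approx (replicate a 1 @ x) a N \<le> zeta2_approx (replicate a 1 @ x) a (Suc N)"
    using N by (simp add: zero_le_mult_iff mult_le_0_iff)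
qed

lemma zeta_star_2_replicate_less_if_dominated:
  assumes dom: "dominates (2 # replicate a 1 @ x) x" and "0 \<notin> set x"
  shows "zeta_star (2 # replicate a 1 @ x) < real a + 2"
proof (rule zeta_star_2_less_if_approx_decreasing)
  have "real (Suc 1) * real 1
      * (zeta2_approx (replicate a 1 @ x) a (Suc 1) - zeta2_approx (replicate a 1 @ x) a 1) < 0"
    unfolding zeta2_approx_replicate_increment[OF order_refl]
    using zeta_star_upto_2_less_if_dominates[OF dom] assms by (simp add: numeral_2_eq_2)
  then show "zeta2_approx (replicate a 1 @ x) a 2 < zeta2_approx (replicate a 1 @ x) a 1"
    by (simp add: numeral_2_eq_2)
  fix N :: nat
  assume N: "N \<ge> 1"
  have "zeta_star_upto x (Suc N) \<le> zeta_star_upto (2 # replicate a 1 @ x) (Suc N)"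
    using assms by (intro zeta_star_upto_le_if_dominates[OF dom]) auto
  then have "real (Suc N) * real N
      * (zeta2_approx (replicate a 1 @ x) a (Suc N) - zeta2_approx (replicate a 1 @ x) a N) \<le> 0"
    unfolding zeta2_approx_replicate_increment[OF N] by simp
  then show "zeta2_approx (replicate a 1 @ x) a (Suc N) \<le> zeta2_approx (replicate a 1 @ x) a N"
    using N by (simp add: mult_le_0_iff)
qed

lemma zeta_star_2_replicate_gt:
  assumes "0 \<notin> set x" and bound: "\<And>N. zeta_star_upto (2 # replicate a 1 @ x) N \<le> c"
  shows "real a + 1 < zeta_star (2 # replicate a 1 @ x)"
proof (cases a)
  case 0
  have "1 < zeta_star_upto (2 # replicate a 1 @ x) 2"
    using zeta_star_upto_ge_1[of 2 "replicate a 1 @ x"] by (simp add: zeta_star_upto_2)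
  also have "\<dots> \<le> zeta_star (2 # replicate a 1 @ x)"
    using bound by (rule zeta_star_upto_le_zeta_star)
  finally show ?thesis
    using 0 by simp
next
  case (Suc a')
  then have ks: "2 # replicate a 1 @ x = 2 # replicate a' 1 @ 1 # x"
    by (simp add: replicate_app_Cons_same)
  have "real a' + 2 < zeta_star (2 # replicate a' 1 @ 1 # x)"
    using assms unfolding ks by (intro zeta_star_2_replicate_gt_if_dominates) auto
  then show ?thesis
    using Suc ks by simp
qed

lemma zeta_star_2_replicate_not_Ints:
  assumes x: "0 \<notin> set x" "x = [] \<or> hd x \<ge> 2"
  shows "zeta_star (2 # replicate a 1 @ x) \<notin> \<int>"
proof -
  let ?ks = "2 # replicate a 1 @ x"
  have bound: "zeta_star_upto ?ks N \<le> real a + 3" for N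
    using x by (rule zeta_star_upto_2_replicate_le)
  have "x \<noteq> ?ks"
    by (auto dest: arg_cong[of _ _ length])
  then consider "dominates x ?ks" | "dominates ?ks x"
    using dominates_total by blast
  then show ?thesis
  proof cases
    case 1
    then have "real a + 2 < zeta_star ?ks"
      using x bound by (intro zeta_star_2_replicate_gt_if_dominates)
    then show ?thesis
      using zeta_star_2_replicate_less[OF x, of a] by (intro not_Ints_between[of "a + 2"]) auto
  next
    case 2
    then have "zeta_star ?ks < real a + 2"
      using x by (intro zeta_star_2_replicate_less_if_dominated)
    then show ?thesis
      using zeta_star_2_replicate_gt[OF x(1) bound] by (intro not_Ints_between[of "a + 1"]) auto
  qed
qed

lemma replicate_1_append_decomposition:
  "\<exists>a x. u = replicate a 1 @ x \<and> (x = [] \<or> hd x \<noteq> 1)"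
proof (induction u)
  case Nil
  show ?case
    by (rule exI[of _ 0]) simp
next
  case (Cons k u)
  then obtain a x where ax: "u = replicate a 1 @ x" "x = [] \<or> hd x \<noteq> 1"
    by blast
  show ?case
  proof (cases "k = 1")
    case True
    with ax show ?thesis
      by (intro exI[of _ "Suc a"] exI[of _ x]) simp
  next
    case False
    then show ?thesis
      by (intro exI[of _ 0] exI[of _ "k # u"]) simp
  qed
qed

lemma zeta_star_2_not_Ints:
  assumes "0 \<notin> set u"
  shows "zeta_star (2 # u) \<notin> \<int>"
proof -
  obtain a x where u: "u = replicate a 1 @ x" and "x = [] \<or> hd x \<noteq> 1"
    using replicate_1_append_decomposition by blast
  moreover have "0 \<notin> set x"
    using assms u by simp
  ultimately have "x = [] \<or> hd x \<ge> 2"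
    by (cases x) auto
  with \<open>0 \<notin> set x\<close> show ?thesis
    unfolding u by (rule zeta_star_2_replicate_not_Ints)
qed

theorem theorem1p8:
  fixes ks :: "nat list"
  assumes "length ks \<ge> 1"
    and "ks ! 0 \<ge> 2"
    and "\<forall>i. 1 \<le> i \<and> i < length ks \<longrightarrow> ks ! i \<ge> 1"
  shows "zeta_star ks \<notin> \<int>"
proof -
  obtain k w where ks: "ks = k # w"
    using assms(1) by (cases ks) auto
  have w: "0 \<notin> set w"
    using assms(3) unfolding ks by (auto simp: in_set_conv_nth)
  show ?thesis
  proof (cases "k = 2")
    case True
    then show ?thesis
      using zeta_star_2_not_Ints[OF w] ks by simp
  next
    case False
    then show ?thesis
      using zeta_star_ge_3_not_Ints[OF _ w] assms(2) ks by simp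
  qed
qed

end
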